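(* Let $n>k+\ell$, and let $\mathcal F\subset\binom{[n]}{k}$, $\mathcal G\subset\binom{[n]}{\ell}$ be non-trivial cross-intersecting families forming a saturated pair, shifted ad extremis with respect to $\tau(\mathcal F)\ge2$, and not both initial. If the 2-cover graph $\hat{\mathcal H}$ of $\mathcal F$ is triangle-free, then there are disjoint sets $X,Y\subset[n]$ with $X\cup Y=[|X|+|Y|]$, $2\le|X|\le k$, $2\le|Y|\le k$, such that the edge set of $\hat{\mathcal H}$ is exactly $\{\{x,y\}:x\in X,y\in Y\}$.
   Context: Non-trivial: nonempty and not a star (a star is a family whose members share a common element). Cross-intersecting: $F\cap G\ne\emptyset$ for all $F\in\mathcal F,G\in\mathcal G$; saturated pair: adding any further $k$-set to $\mathcal F$ or $\ell$-set to $\mathcal G$ destroys cross-intersection. Shifting: for $i<j$, $S_{ij}(F)=(F\setminus\{j\})\cup\{i\}$ if $j\in F$, $i\notin F$, $(F\setminus\{j\})\cup\{i\}\notin\mathcal F$, else $S_{ij}(F)=F$; $S_{ij}(\mathcal F)=\{S_{ij}(F):F\in\mathcal F\}$. Shifted ad extremis with respect to $\tau(\mathcal F)\ge2$: for every $1\le i<j\le n$, either $S_{ij}(\mathcal F)=\mathcal F$ and $S_{ij}(\mathcal G)=\mathcal G$, or $S_{ij}(\mathcal F)$ is a star. Initial: with $(a_1,\dots,a_k)\prec(b_1,\dots,b_k)$ iff $a_i\le b_i$ for all $i$, a family is initial if $A\prec B\in\mathcal F$ implies $A\in\mathcal F$. The 2-cover graph $\hat{\mathcal H}$ has vertex set $[n]$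 and edges $\{i,j\}$ such that every $F\in\mathcal F$ meets $\{i,j\}$. *)

theory Defs
  imports Main
begin

definition k_sets :: "nat \<Rightarrow> nat \<Rightarrow> nat set set" where
  "k_sets n k = {A. A \<subseteq> {1..n} \<and> card A = k}"

definition is_star :: "nat set set \<Rightarrow> bool" where
  "is_star F \<longleftrightarrow> (\<exists>x. \<forall>A\<in>F. x \<in> A)"

definition nontrivial :: "nat set set \<Rightarrow> bool" where
  "nontrivial F \<longleftrightarrow> F \<noteq> {} \<and> \<not> is_star F"

definition cross_intersecting :: "nat set set \<Rightarrow> nat set set \<Rightarrow> bool" where
  "cross_intersecting F G \<longleftrightarrow> (\<forall>A\<in>F. \<forall>B\<in>G. A \<inter> B \<noteq> {})"

definition saturated_pair :: "nat \<Rightarrow> nat \<Rightarrow> nat \<Rightarrow> nat set set \<Rightarrow> nat set set \<Rightarrow> bool" where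
  "saturated_pair n k l F G \<longleftrightarrow>
     (\<forall>A \<in> k_sets n k - F. \<not> cross_intersecting (insert A F) G) \<and>
     (\<forall>B \<in> k_sets n l - G. \<not> cross_intersecting F (insert B G))"

definition shift_set :: "nat \<Rightarrow> nat \<Rightarrow> nat set set \<Rightarrow> nat set \<Rightarrow> nat set" where
  "shift_set i j F A =
     (if j \<in> A \<and> i \<notin> A \<and> (A - {j}) \<union> {i} \<notin> F then (A - {j}) \<union> {i} else A)"

definition shift :: "nat \<Rightarrow> nat \<Rightarrow> nat set set \<Rightarrow> nat set set" where
  "shift i j F = shift_set i j F ` F"

definition shifted_ad_extremis :: "nat \<Rightarrow> nat set set \<Rightarrow> nat set set \<Rightarrow> bool" where
  "shifted_ad_extremis n F G \<longleftrightarrow>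
     (\<forall>i j. 1 \<le> i \<and> i < j \<and> j \<le> n \<longrightarrow>
        (shift i j F = F \<and> shift i j G = G) \<or> is_star (shift i j F))"

text \<open>Shifting partial order: compare the increasingly sorted element lists coordinatewise.\<close>
definition shift_le :: "nat set \<Rightarrow> nat set \<Rightarrow> bool" where
  "shift_le A B \<longleftrightarrow> card A = card B \<and>
     (\<forall>t < card A. sorted_list_of_set A ! t \<le> sorted_list_of_set B ! t)"

definition initial :: "nat \<Rightarrow> nat set set \<Rightarrow> bool" where
  "initial n F \<longleftrightarrow> (\<forall>A B. A \<subseteq> {1..n} \<and> B \<in> F \<and> shift_le A B \<longrightarrow> A \<in> F)"

definition cover_edges :: "nat \<Rightarrow> nat set set \<Rightarrow> nat set set" where
  "cover_edges n F = {{i, j} | i j. i \<in> {1..n} \<and> j \<in> {1..n} \<and> i \<noteq> j \<and>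
                                    (\<forall>A\<in>F. A \<inter> {i, j} \<noteq> {})}"

definition triangle_free :: "nat set set \<Rightarrow> bool" where
  "triangle_free E \<longleftrightarrow> \<not> (\<exists>a b c. a \<noteq> b \<and> b \<noteq> c \<and> a \<noteq> c \<and>
        {a, b} \<in> E \<and> {b, c} \<in> E \<and> {a, c} \<in> E)"

end

theory Submission
  imports Defs
begin

text \<open>Unless both families are initial, some shift \<open>S\<^sub>i\<^sub>j\<close> turns \<open>F\<close> into a star, and then
  \<open>{i, j}\<close> is an edge of the 2-cover graph. Being shifted ad extremis, \<open>F\<close> is fixed by \<open>S\<^sub>c\<^sub>a\<close>
  for every non-edge \<open>c < a\<close>, so a vertex below a non-neighbour inherits all its neighbours. With
  triangle-freeness this makes the non-isolated vertices an initial segment \<open>[m]\<close> carrying a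
  complete bipartite graph \<open>X \<times> Y\<close>. A side with one vertex would be a vertex cover \<open>{i, j}\<close>;
  then \<open>F\<close> is closed under all shifts avoiding \<open>i, j\<close>, and compression produces members
  \<open>L \<union> {i}\<close> and \<open>L \<union> {j}\<close> of \<open>F\<close>, impossible when \<open>S\<^sub>i\<^sub>j F\<close> is a star. Each side lies in a
  member of \<open>F\<close> avoiding a vertex of the other side, hence has at most \<open>k\<close> elements.\<close>

lemma nth_take_append_drop:
  assumes "length as = length bs" "t < length as"
  shows "(take m as @ drop m bs) ! t = (if t < m then as ! t else bs ! t)"
  using assms by (auto simp: nth_append min_def)

lemma sorted_take_append_drop:
  fixes as bs :: "'a::linorder list"
  assumes as: "sorted_wrt (<) as" and bs: "sorted_wrt (<) bs"
    and len: "length as = length bs" and le: "\<forall>t<length as. as ! t \<le> bs ! t"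
  shows "sorted_wrt (<) (take m as @ drop m bs)"
  unfolding sorted_wrt_iff_nth_less
proof (intro allI impI)
  fix s t assume st: "s < t" "t < length (take m as @ drop m bs)"
  then have t: "t < length as" using len by simp
  have "as ! s < as ! t" "bs ! s < bs ! t"
    using as bs st t len by (simp_all add: sorted_wrt_iff_nth_less)
  moreover have "as ! t \<le> bs ! t" using le t by blast
  ultimately show "(take m as @ drop m bs) ! s < (take m as @ drop m bs) ! t"
    using st t len by (auto simp: nth_take_append_drop)
qed

text \<open>Replacing the entries of \<open>bs\<close> by those of \<open>as\<close> from left to right,
  each step is a single downward shift and every intermediate list stays strictly sorted.\<close>
lemma mem_if_pointwise_le:
  fixes H :: "nat set set" and as bs :: "nat list"
  assumes closed: "\<And>B c b. B \<in> H \<Longrightarrow> 1 \<le> c \<Longrightarrow> c < b \<Longrightarrow> b \<in> B \<Longrightarrow> c \<notin> B \<Longrightarrow> B - {b} \<union> {c} \<in> H"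
    and as: "sorted_wrt (<) as" and bs: "sorted_wrt (<) bs" and len: "length as = length bs"
    and le: "\<forall>t<length as. 1 \<le> as ! t \<and> as ! t \<le> bs ! t" and "set bs \<in> H"
  shows "set as \<in> H"
proof -
  define L where "L m = take m as @ drop m bs" for m
  have nth_L: "L m ! t = (if t < m then as ! t else bs ! t)" if "t < length as" for m t
    unfolding L_def using nth_take_append_drop[OF len that] .
  have len_L: "length (L m) = length as" for m using len by (simp add: L_def)
  have "set (L m) \<in> H" if "m \<le> length as" for m
    using that
  proof (induction m)
    case 0
    then show ?case using \<open>set bs \<in> H\<close> by (simp add: L_def)
  next
    case (Suc m)
    then have m: "m < length as" by simp
    have step: "L (Suc m) = (L m)[m := as ! m]"
      using m by (intro nth_equalityI) (auto simp: len_L nth_L nth_list_update)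
    show ?case
    proof (cases "as ! m = bs ! m")
      case True
      then have "L (Suc m) = L m" by (intro nth_equalityI) (auto simp: len_L nth_L less_Suc_eq)
      then show ?thesis using Suc by simp
    next
      case False
      have sorted_L: "sorted_wrt (<) (L m)"
        unfolding L_def using sorted_take_append_drop[OF as bs len] le by blast
      have new: "as ! m \<notin> set (L m)"
      proof
        assume "as ! m \<in> set (L m)"
        then obtain p where p: "p < length as" "L m ! p = as ! m" by (auto simp: in_set_conv_nth len_L)
        have "as ! p < as ! m" if "p < m" using as that m by (simp add: sorted_wrt_iff_nth_less)
        moreover have "as ! m < bs ! p" if "m < p"
        proof -
          have "bs ! m < bs ! p" using bs that p len by (simp add: sorted_wrt_iff_nth_less)
          then show ?thesis using le m by (meson order.strict_trans1)
        qed
        ultimately show False using p False nth_L[OF p(1)] by (cases p m rule: linorder_cases) auto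
      qed
      have "set (L (Suc m)) = set (L m) - {bs ! m} \<union> {as ! m}"
        using step set_update_distinct[of "L m" m] sorted_L m nth_L[OF m]
        by (auto simp: strict_sorted_iff len_L)
      moreover have "bs ! m \<in> set (L m)" using nth_L[OF m] nth_mem[of m "L m"] m by (simp add: len_L)
      moreover have "as ! m < bs ! m" using le m False by (simp add: le_neq_implies_less)
      moreover have "set (L m) \<in> H" using Suc by simp
      ultimately show ?thesis using closed new le m by simp
    qed
  qed
  from this[of "length as"] show ?thesis using len by (simp add: L_def)
qed

lemma shift_fixed_mem:
  assumes "shift i j H = H" "A \<in> H" "j \<in> A" "i \<notin> A"
  shows "A - {j} \<union> {i} \<in> H"
proof (rule ccontr)
  assume "A - {j} \<union> {i} \<notin> H"
  then have "A - {j} \<union> {i} \<in> shift i j H"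
    using assms(2-4) unfolding shift_def shift_set_def by force
  then show False using assms(1) \<open>A - {j} \<union> {i} \<notin> H\<close> by simp
qed

lemma shift_fixed_imp_initial:
  assumes H: "H \<subseteq> k_sets n k" and fixed: "\<And>i j. 1 \<le> i \<Longrightarrow> i < j \<Longrightarrow> j \<le> n \<Longrightarrow> shift i j H = H"
  shows "initial n H"
  unfolding initial_def
proof (intro allI impI, elim conjE)
  fix A B assume A: "A \<subseteq> {1..n}" and B: "B \<in> H" and le: "shift_le A B"
  have H_sub: "B' \<subseteq> {1..n}" if "B' \<in> H" for B' using H that unfolding k_sets_def by auto
  have closed: "B' - {b} \<union> {c} \<in> H" if "B' \<in> H" "1 \<le> c" "c < b" "b \<in> B'" "c \<notin> B'" for B' c b
  proof -
    have "b \<le> n" using H_sub[OF that(1)] that(4) by auto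
    then show ?thesis using shift_fixed_mem[OF fixed] that by blast
  qed
  have "finite A" "finite B" using A H_sub[OF B] finite_subset by auto
  have "set (sorted_list_of_set A) \<in> H"
  proof (rule mem_if_pointwise_le[OF closed])
    show "\<forall>t<length (sorted_list_of_set A). 1 \<le> sorted_list_of_set A ! t \<and>
            sorted_list_of_set A ! t \<le> sorted_list_of_set B ! t"
      using le A \<open>finite A\<close> nth_mem[of _ "sorted_list_of_set A"] unfolding shift_le_def by fastforce
  qed (use B le \<open>finite B\<close> in \<open>auto simp: shift_le_def\<close>)
  then show "A \<in> H" using \<open>finite A\<close> by simp
qed

lemma star_shift_center:
  assumes "\<not> is_star F" "\<forall>B \<in> shift i j F. c \<in> B"
  shows "c = i"
proof (rule ccontr)
  assume "c \<noteq> i"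
  have "c \<in> A" if "A \<in> F" for A
  proof -
    have "c \<in> shift_set i j F A" using assms(2) that unfolding shift_def by blast
    then show ?thesis using \<open>c \<noteq> i\<close> unfolding shift_set_def by (auto split: if_splits)
  qed
  then show False using assms(1) unfolding is_star_def by blast
qed

lemma star_shift_mem:
  assumes "\<not> is_star F" "is_star (shift i j F)" "A \<in> F"
  shows "i \<in> A \<or> (j \<in> A \<and> A - {j} \<union> {i} \<notin> F)"
proof -
  obtain c where "\<forall>B \<in> shift i j F. c \<in> B" using assms(2) unfolding is_star_def by blast
  then have "i \<in> shift_set i j F A"
    using star_shift_center[OF assms(1)] assms(3) unfolding shift_def by blast
  then show ?thesis unfolding shift_set_def by (auto split: if_splits)
qed

definition cover_adj :: "nat \<Rightarrow> nat set set \<Rightarrow> nat \<Rightarrow> nat \<Rightarrow> bool" where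
  "cover_adj n F i j \<longleftrightarrow> i \<in> {1..n} \<and> j \<in> {1..n} \<and> i \<noteq> j \<and> (\<forall>A\<in>F. A \<inter> {i, j} \<noteq> {})"

lemma cover_adj_sym: "cover_adj n F i j \<Longrightarrow> cover_adj n F j i"
  unfolding cover_adj_def by (auto simp: insert_commute)

lemma cover_edges_eq: "cover_edges n F = {{i, j} | i j. cover_adj n F i j}"
  unfolding cover_edges_def cover_adj_def by blast

lemma doubleton_mem_cover_edges_iff: "{i, j} \<in> cover_edges n F \<longleftrightarrow> cover_adj n F i j"
  unfolding cover_edges_eq by (auto simp: doubleton_eq_iff intro: cover_adj_sym)

lemma cover_adj_if_star_shift:
  assumes "\<not> is_star F" "is_star (shift i j F)" "1 \<le> i" "i < j" "j \<le> n"
  shows "cover_adj n F i j"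
  using star_shift_mem[OF assms(1,2)] assms(3-5) unfolding cover_adj_def by fastforce

lemma exists_star_shift:
  assumes "shifted_ad_extremis n F G" "F \<subseteq> k_sets n k" "G \<subseteq> k_sets n l"
    and "\<not> (initial n F \<and> initial n G)"
  obtains i j where "1 \<le> i" "i < j" "j \<le> n" "is_star (shift i j F)"
  using assms shift_fixed_imp_initial[of F n k] shift_fixed_imp_initial[of G n l]
  unfolding shifted_ad_extremis_def by blast

lemma shift_fixed_if_not_cover_adj:
  assumes "shifted_ad_extremis n F G" "\<not> is_star F" "1 \<le> c" "c < a" "a \<le> n" "\<not> cover_adj n F c a"
  shows "shift c a F = F"
  using assms cover_adj_if_star_shift[of F c a n] unfolding shifted_ad_extremis_def by blast

text \<open>A vertex \<open>c\<close> below a non-neighbour \<open>a\<close> inherits all neighbours of \<open>a\<close>: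
  the shift from \<open>a\<close> to \<open>c\<close> fixes \<open>F\<close>, so a member avoiding \<open>{c, b}\<close> would be
  shifted to one avoiding \<open>{a, b}\<close>.\<close>
lemma cover_adj_downward:
  assumes "shifted_ad_extremis n F G" "\<not> is_star F"
    and "1 \<le> c" "c < a" "\<not> cover_adj n F c a" "cover_adj n F a b" "b \<noteq> c"
  shows "cover_adj n F c b"
proof -
  have ab: "a \<le> n" "b \<in> {1..n}" "a \<noteq> b" "\<forall>A\<in>F. A \<inter> {a, b} \<noteq> {}"
    using assms(6) unfolding cover_adj_def by auto
  have fixed: "shift c a F = F" using shift_fixed_if_not_cover_adj assms(1-5) ab(1) by blast
  have "A \<inter> {c, b} \<noteq> {}" if "A \<in> F" for A
  proof
    assume avoid: "A \<inter> {c, b} = {}"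
    then have "a \<in> A" using ab(4) that by auto
    then have "A - {a} \<union> {c} \<in> F" using shift_fixed_mem[OF fixed that] avoid by auto
    moreover have "(A - {a} \<union> {c}) \<inter> {a, b} = {}" using avoid assms(4,7) by auto
    ultimately show False using ab(4) by blast
  qed
  then show ?thesis using ab assms(3,4,7) unfolding cover_adj_def by auto
qed

text \<open>Repeatedly shifting inside \<open>D\<close> strictly decreases the sum of the \<open>D\<close>-part, so a member
  whose \<open>D\<close>-part is downward closed in \<open>D\<close> is reached.\<close>
lemma exists_compressed_member:
  fixes H :: "nat set set" and D :: "nat set"
  assumes closed: "\<And>A c a. A \<in> H \<Longrightarrow> c \<in> D \<Longrightarrow> a \<in> D \<Longrightarrow> c < a \<Longrightarrow> a \<in> A \<Longrightarrow> c \<notin> A \<Longrightarrow> A - {a} \<union> {c} \<in> H"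
    and "A \<in> H" "finite A"
  shows "\<exists>A'\<in>H. A' - D = A - D \<and> card (A' \<inter> D) = card (A \<inter> D) \<and>
           (\<forall>c\<in>D. \<forall>a\<in>A' \<inter> D. c < a \<longrightarrow> c \<in> A')"
  using assms(2,3)
proof (induction "\<Sum>(A \<inter> D)" arbitrary: A rule: less_induct)
  case less
  show ?case
  proof (cases "\<forall>c\<in>D. \<forall>a\<in>A \<inter> D. c < a \<longrightarrow> c \<in> A")
    case True
    then show ?thesis using less.prems by blast
  next
    case False
    then obtain c a where ca: "c \<in> D" "a \<in> A" "a \<in> D" "c < a" "c \<notin> A" by blast
    define A1 where "A1 = A - {a} \<union> {c}"
    have fin: "finite (A \<inter> D)" using less.prems by simp
    have D_part: "A1 \<inter> D = insert c (A \<inter> D - {a})" "c \<notin> A \<inter> D - {a}"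
      unfolding A1_def using ca by auto
    have "\<Sum>(A1 \<inter> D) = c + \<Sum>(A \<inter> D - {a})" unfolding D_part(1) using fin D_part(2) by simp
    also have "\<dots> < a + \<Sum>(A \<inter> D - {a})" using ca by simp
    also have "\<dots> = \<Sum>(A \<inter> D)" using fin ca by (simp add: sum.remove)
    finally have smaller: "\<Sum>(A1 \<inter> D) < \<Sum>(A \<inter> D)" .
    have "card (A1 \<inter> D) = card (A \<inter> D)"
      unfolding D_part(1) using fin D_part(2) ca card_Suc_Diff1[of "A \<inter> D" a] by simp
    moreover have "A1 - D = A - D" unfolding A1_def using ca by auto
    moreover have "A1 \<in> H" "finite A1" unfolding A1_def using closed less.prems ca by auto
    ultimately show ?thesis using less.hyps[OF smaller] by metis
  qed
qed

lemma downward_closed_subsets_eq: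
  fixes D S T :: "nat set"
  assumes "S \<subseteq> D" "T \<subseteq> D" "finite S" "finite T" "card S = card T"
    and "\<forall>c\<in>D. \<forall>a\<in>S. c < a \<longrightarrow> c \<in> S" "\<forall>c\<in>D. \<forall>a\<in>T. c < a \<longrightarrow> c \<in> T"
  shows "S = T"
proof -
  have "S \<subseteq> T \<or> T \<subseteq> S"
  proof (rule ccontr)
    assume "\<not> (S \<subseteq> T \<or> T \<subseteq> S)"
    then obtain a b where "a \<in> S" "a \<notin> T" "b \<in> T" "b \<notin> S" by blast
    then show False using assms(1,2,6,7) by (cases a b rule: linorder_cases) blast+
  qed
  then show ?thesis using card_subset_eq assms(3-5) by metis
qed

text \<open>If \<open>{x, y}\<close> is a vertex cover of the 2-cover graph, no two vertices of
  \<open>D = [n] - {x, y}\<close> are adjacent, so \<open>F\<close> is closed under shifts inside \<open>D\<close>. Compressing a member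
  avoiding \<open>y\<close> and one avoiding \<open>x\<close> yields the same downward closed part of \<open>D\<close>.\<close>
lemma swap_pair_members:
  assumes ad: "shifted_ad_extremis n F G" and ns: "\<not> is_star F" and Fk: "F \<subseteq> k_sets n k"
    and xy: "cover_adj n F x y"
    and cover: "\<And>a b. cover_adj n F a b \<Longrightarrow> a \<in> {x, y} \<or> b \<in> {x, y}"
  obtains L where "x \<notin> L" "y \<notin> L" "insert x L \<in> F" "insert y L \<in> F"
proof -
  define D where "D = {1..n} - {x, y}"
  have F_sub: "A \<subseteq> {1..n} \<and> card A = k" if "A \<in> F" for A using Fk that unfolding k_sets_def by auto
  have closed: "A - {a} \<union> {c} \<in> F" if "A \<in> F" "c \<in> D" "a \<in> D" "c < a" "a \<in> A" "c \<notin> A" for A c a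
  proof -
    have "\<not> cover_adj n F c a" using cover that(2,3) unfolding D_def by auto
    then have "shift c a F = F" using shift_fixed_if_not_cover_adj[OF ad ns] that(2-4) unfolding D_def by auto
    then show ?thesis using shift_fixed_mem that by blast
  qed
  have compressed: "\<exists>S. S \<subseteq> D \<and> card S = k - 1 \<and> (\<forall>c\<in>D. \<forall>a\<in>S. c < a \<longrightarrow> c \<in> S) \<and> insert z S \<in> F"
    if zz': "{z, z'} = {x, y}" "z \<noteq> z'" for z z'
  proof -
    obtain A where A: "A \<in> F" "z' \<notin> A" using ns unfolding is_star_def by blast
    have "A \<inter> {z, z'} \<noteq> {}" using xy A(1) zz'(1) unfolding cover_adj_def by simp
    then have "A - D = {z}" using F_sub[OF A(1)] A(2) zz'(1) unfolding D_def by blast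
    then have "A \<inter> D = A - {z}" "z \<in> A" by blast+
    moreover have "finite A" using F_sub[OF A(1)] finite_subset by blast
    ultimately have "card (A \<inter> D) = k - 1" using F_sub[OF A(1)] by simp
    obtain A' where "A' \<in> F" "A' - D = A - D" "card (A' \<inter> D) = card (A \<inter> D)"
        "\<forall>c\<in>D. \<forall>a\<in>A' \<inter> D. c < a \<longrightarrow> c \<in> A'"
      using exists_compressed_member[OF closed A(1) \<open>finite A\<close>] by blast
    moreover have "insert z (A' \<inter> D) = A'" using \<open>A - D = {z}\<close> \<open>A' - D = A - D\<close> by blast
    ultimately show ?thesis using \<open>card (A \<inter> D) = k - 1\<close> by (intro exI[of _ "A' \<inter> D"]) auto
  qed
  obtain S T where S: "S \<subseteq> D" "card S = k - 1" "\<forall>c\<in>D. \<forall>a\<in>S. c < a \<longrightarrow> c \<in> S" "insert x S \<in> F"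
    and T: "T \<subseteq> D" "card T = k - 1" "\<forall>c\<in>D. \<forall>a\<in>T. c < a \<longrightarrow> c \<in> T" "insert y T \<in> F"
    using compressed[of x y] compressed[of y x] xy unfolding cover_adj_def by (auto simp: insert_commute)
  have "finite D" unfolding D_def by simp
  then have "S = T" using downward_closed_subsets_eq[OF S(1) T(1)] S T finite_subset by metis
  then show ?thesis using that S T unfolding D_def by blast
qed

lemma cover_graph_no_center:
  assumes ad: "shifted_ad_extremis n F G" and ns: "\<not> is_star F" and Fk: "F \<subseteq> k_sets n k"
    and ij: "1 \<le> i" "i < j" "j \<le> n" "is_star (shift i j F)"
  shows "\<exists>a b. cover_adj n F a b \<and> a \<noteq> x \<and> b \<noteq> x"
proof (rule ccontr)
  assume "\<not> ?thesis"
  then have through_x: "cover_adj n F a b \<Longrightarrow> a = x \<or> b = x" for a b by blast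
  have ij_adj: "cover_adj n F i j" using cover_adj_if_star_shift[OF ns ij(4,1-3)] .
  then have "x \<in> {i, j}" using through_x by blast
  then have "cover_adj n F a b \<Longrightarrow> a \<in> {i, j} \<or> b \<in> {i, j}" for a b using through_x by blast
  then obtain L where L: "i \<notin> L" "j \<notin> L" "insert i L \<in> F" "insert j L \<in> F"
    using swap_pair_members[OF ad ns Fk ij_adj] by blast
  have "insert j L - {j} \<union> {i} = insert i L" using L(2) by auto
  then show False using star_shift_mem[OF ns ij(4) L(4)] L(1,3) ij(2) by auto
qed

lemma eq_atLeastAtMost_card_if_downward_closed:
  fixes V :: "nat set"
  assumes "finite V" "\<forall>v\<in>V. 1 \<le> v" "\<And>v c. v \<in> V \<Longrightarrow> 1 \<le> c \<Longrightarrow> c < v \<Longrightarrow> c \<in> V"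
  shows "V = {1..card V}"
proof (cases "V = {}")
  case False
  have "V = {1..Max V}"
  proof
    show "V \<subseteq> {1..Max V}" using assms(1,2) by auto
    show "{1..Max V} \<subseteq> V"
      using assms(3)[of "Max V"] Max_in[OF assms(1) False] by (auto simp: le_less)
  qed
  then show ?thesis by (metis card_atLeastAtMost diff_Suc_1)
qed simp

lemma two_le_card_vertex_cover:
  assumes "finite X" "\<And>a b. E a b \<Longrightarrow> a \<in> X \<or> b \<in> X" "\<And>x. \<exists>a b. E a b \<and> a \<noteq> x \<and> b \<noteq> x"
  shows "2 \<le> card X"
proof (rule ccontr)
  assume "\<not> 2 \<le> card X"
  then have "\<forall>a\<in>X. \<forall>b\<in>X. a = b" using card_le_Suc0_iff_eq[OF assms(1)] by simp
  then obtain x where "X \<subseteq> {x}" by blast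
  moreover obtain a b where "E a b" "a \<noteq> x" "b \<noteq> x" using assms(3) by blast
  ultimately show False using assms(2) by blast
qed

locale shifted_triangle_free_graph =
  fixes n :: nat and adj :: "nat \<Rightarrow> nat \<Rightarrow> bool"
  assumes adj_sym: "adj a b \<Longrightarrow> adj b a"
    and adj_irrefl: "adj a b \<Longrightarrow> a \<noteq> b"
    and adj_range: "adj a b \<Longrightarrow> a \<in> {1..n}"
    and triangle_free: "adj a b \<Longrightarrow> adj b c \<Longrightarrow> \<not> adj a c"
    and adj_downward: "1 \<le> c \<Longrightarrow> c < a \<Longrightarrow> \<not> adj c a \<Longrightarrow> adj a b \<Longrightarrow> b \<noteq> c \<Longrightarrow> adj c b"
begin

definition support :: "nat set" where
  "support = {v. \<exists>w. adj v w}"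

lemma support_subset: "support \<subseteq> {1..n}"
  using adj_range unfolding support_def by blast

lemma support_eq_atLeastAtMost: "support = {1..card support}"
proof (rule eq_atLeastAtMost_card_if_downward_closed)
  show "finite support" using support_subset finite_subset by blast
  show "\<forall>v\<in>support. 1 \<le> v" using support_subset by auto
  fix v c assume "v \<in> support" "1 \<le> c" "c < v"
  then obtain w where "adj v w" unfolding support_def by blast
  then show "c \<in> support"
    using adj_downward[OF \<open>1 \<le> c\<close> \<open>c < v\<close>] adj_sym unfolding support_def by blast
qed

text \<open>If \<open>v\<close> is adjacent to neither end of \<open>ab\<close>, it lies above both, and then both ends
  inherit a neighbour of \<open>v\<close>, closing a triangle.\<close>
lemma support_adj_edge_end:
  assumes "v \<in> support" "adj a b" "v \<noteq> a" "v \<noteq> b"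
  shows "adj v a \<or> adj v b"
proof (rule ccontr)
  assume "\<not> (adj v a \<or> adj v b)"
  then have na: "\<not> adj v a" "\<not> adj v b" "\<not> adj a v" "\<not> adj b v" using adj_sym by blast+
  have "1 \<le> v" "1 \<le> a" "1 \<le> b" using adj_range assms(1,2) adj_sym unfolding support_def by fastforce+
  have "a < v"
  proof (rule ccontr)
    assume "\<not> a < v"
    then have "v < a" using assms(3) by simp
    then show False using adj_downward[OF \<open>1 \<le> v\<close> _ na(1) assms(2)] na(2) assms(4) by blast
  qed
  have "b < v"
  proof (rule ccontr)
    assume "\<not> b < v"
    then have "v < b" using assms(4) by simp
    then show False using adj_downward[OF \<open>1 \<le> v\<close> _ na(2) adj_sym[OF assms(2)]] na(1) assms(3) by blast
  qed
  obtain w where w: "adj v w" using assms(1) unfolding support_def by blast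
  then have "w \<noteq> a" "w \<noteq> b" using na by blast+
  then have "adj a w" "adj b w"
    using adj_downward[OF \<open>1 \<le> a\<close> \<open>a < v\<close> na(3) w] adj_downward[OF \<open>1 \<le> b\<close> \<open>b < v\<close> na(4) w] by blast+
  then show False using triangle_free assms(2) adj_sym by blast
qed

lemma complete_bipartite:
  assumes "adj u w"
  shows "\<exists>X Y. X \<inter> Y = {} \<and> X \<union> Y = {1..card X + card Y} \<and> X \<subseteq> {1..n} \<and> Y \<subseteq> {1..n} \<and>
           (\<forall>a b. adj a b \<longleftrightarrow> (a \<in> X \<and> b \<in> Y) \<or> (a \<in> Y \<and> b \<in> X))"
proof -
  define X where "X = {v \<in> support. \<not> adj v u}"
  define Y where "Y = {v \<in> support. \<not> adj v w}"
  have uX: "u \<in> X" and wY: "w \<in> Y"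
    using assms adj_sym adj_irrefl unfolding X_def Y_def support_def by blast+
  have disjoint: "X \<inter> Y = {}"
    using support_adj_edge_end[OF _ assms] assms adj_sym unfolding X_def Y_def by blast
  have union: "X \<union> Y = support"
    using triangle_free[OF assms] adj_sym unfolding X_def Y_def by blast
  have across: "adj a b" if "a \<in> X" "b \<in> Y" for a b
    using support_adj_edge_end[of a b u] that disjoint union adj_sym unfolding X_def by blast
  have no_edge_X: "\<not> adj a b" if "a \<in> X" "b \<in> X" for a b
    using support_adj_edge_end[of u a b] that uX adj_sym unfolding X_def by blast
  have no_edge_Y: "\<not> adj a b" if "a \<in> Y" "b \<in> Y" for a b
    using support_adj_edge_end[of w a b] that wY adj_sym unfolding Y_def by blast
  have "adj a b \<longleftrightarrow> (a \<in> X \<and> b \<in> Y) \<or> (a \<in> Y \<and> b \<in> X)" for a b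
    using across no_edge_X no_edge_Y union adj_sym unfolding support_def by blast
  moreover have "card X + card Y = card support"
    using union disjoint support_eq_atLeastAtMost card_Un_disjoint
    by (metis finite_Un finite_atLeastAtMost)
  moreover have "X \<subseteq> {1..n}" "Y \<subseteq> {1..n}" using union support_subset by auto
  ultimately show ?thesis using disjoint union support_eq_atLeastAtMost by metis
qed

end

lemma card_le_if_cover_adj_all:
  assumes "F \<subseteq> k_sets n k" "\<not> is_star F" "\<And>x. x \<in> X \<Longrightarrow> cover_adj n F x y"
  shows "card X \<le> k"
proof -
  obtain A where A: "A \<in> F" "y \<notin> A" using assms(2) unfolding is_star_def by blast
  then have "X \<subseteq> A" using assms(3) unfolding cover_adj_def by blast
  moreover have "A \<subseteq> {1..n}" "card A = k" using assms(1) A(1) unfolding k_sets_def by auto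
  moreover have "finite A" using \<open>A \<subseteq> {1..n}\<close> finite_subset by blast
  ultimately show ?thesis using card_mono by metis
qed

lemma shifted_triangle_free_graph_cover_adj:
  assumes ad: "shifted_ad_extremis n F G" and ns: "\<not> is_star F"
    and tf: "triangle_free (cover_edges n F)"
  shows "shifted_triangle_free_graph n (cover_adj n F)"
proof
  fix a b c
  show "cover_adj n F a b \<Longrightarrow> cover_adj n F b a" by (rule cover_adj_sym)
  show "cover_adj n F a b \<Longrightarrow> a \<noteq> b" "cover_adj n F a b \<Longrightarrow> a \<in> {1..n}"
    unfolding cover_adj_def by auto
  show "1 \<le> c \<Longrightarrow> c < a \<Longrightarrow> \<not> cover_adj n F c a \<Longrightarrow> cover_adj n F a b \<Longrightarrow> b \<noteq> c \<Longrightarrow>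
      cover_adj n F c b"
    by (rule cover_adj_downward[OF ad ns])
  assume edges: "cover_adj n F a b" "cover_adj n F b c"
  show "\<not> cover_adj n F a c"
  proof
    assume "cover_adj n F a c"
    moreover have "a \<noteq> b" "b \<noteq> c" "a \<noteq> c" using edges calculation by (auto simp: cover_adj_def)
    ultimately show False using edges tf unfolding triangle_free_def doubleton_mem_cover_edges_iff by blast
  qed
qed

theorem proposition5p4:
  fixes n k l :: nat and F G :: "nat set set"
  assumes "n > k + l"
    and "F \<subseteq> k_sets n k" and "G \<subseteq> k_sets n l"
    and "nontrivial F" and "nontrivial G"
    and "cross_intersecting F G"
    and "saturated_pair n k l F G"
    and "shifted_ad_extremis n F G"
    and "\<not> (initial n F \<and> initial n G)"
    and "triangle_free (cover_edges n F)"
  shows "\<exists>X Y. X \<subseteq> {1..n} \<and> Y \<subseteq> {1..n} \<and> X \<inter> Y = {} \<and>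
           X \<union> Y = {1..card X + card Y} \<and>
           2 \<le> card X \<and> card X \<le> k \<and> 2 \<le> card Y \<and> card Y \<le> k \<and>
           cover_edges n F = {{x, y} | x y. x \<in> X \<and> y \<in> Y}"
proof -
  have ns: "\<not> is_star F" using assms(4) unfolding nontrivial_def by blast
  obtain i j where ij: "1 \<le> i" "i < j" "j \<le> n" "is_star (shift i j F)"
    using exists_star_shift assms(8,2,3,9) by blast
  obtain X Y where XY: "X \<inter> Y = {}" "X \<union> Y = {1..card X + card Y}"
    "X \<subseteq> {1..n}" "Y \<subseteq> {1..n}"
    and adj_iff: "\<And>a b. cover_adj n F a b \<longleftrightarrow> (a \<in> X \<and> b \<in> Y) \<or> (a \<in> Y \<and> b \<in> X)"
    using shifted_triangle_free_graph.complete_bipartite[OF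
        shifted_triangle_free_graph_cover_adj[OF assms(8) ns assms(10)] cover_adj_if_star_shift[OF ns ij(4,1-3)]]
    by blast
  have fin: "finite X" "finite Y" using XY(3,4) finite_subset by auto
  have no_center: "\<exists>a b. cover_adj n F a b \<and> a \<noteq> x \<and> b \<noteq> x" for x
    using cover_graph_no_center[OF assms(8) ns assms(2) ij] .
  have "2 \<le> card X" "2 \<le> card Y"
    by (rule two_le_card_vertex_cover[OF fin(1) _ no_center] two_le_card_vertex_cover[OF fin(2) _ no_center];
        use adj_iff in blast)+
  then obtain x y where "x \<in> X" "y \<in> Y" by fastforce
  have "card X \<le> k"
    by (rule card_le_if_cover_adj_all[OF assms(2) ns, of X y]) (simp add: adj_iff \<open>y \<in> Y\<close>)
  moreover have "card Y \<le> k"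
    by (rule card_le_if_cover_adj_all[OF assms(2) ns, of Y x]) (simp add: adj_iff \<open>x \<in> X\<close>)
  moreover have "cover_edges n F = {{x, y} | x y. x \<in> X \<and> y \<in> Y}"
    unfolding cover_edges_eq adj_iff by (auto simp: insert_commute)
  ultimately show ?thesis
    using XY \<open>2 \<le> card X\<close> \<open>2 \<le> card Y\<close> by - (rule exI[of _ X], rule exI[of _ Y], simp)
qed

end
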